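(* Let $1\le p_1\le\cdots\le p_d\le n$ be integers and let $G_0=G_0(p_1,\ldots,p_d)$ be the $d$-uniform $d$-partite hypergraph with vertex classes $V_1,\ldots,V_d$, each identified with $[n]$, in which a $d$-tuple $(x_1,\ldots,x_d)\in[n]^d$ is a non-edge if and only if $x_{(i)}\ge p_i$ for every $1\le i\le d$. Then $W_n(p_1,\ldots,p_d)\ge \|G_0\|$, where $\|G_0\|$ is the number of edges of $G_0$; i.e., every weakly $K^d_{p_1,\ldots,p_d}$-saturated $d$-uniform $d$-partite hypergraph with $n$ vertices in each class has at least $\|G_0\|$ edges.
   Context: A $d$-uniform $d$-partite hypergraph has vertex classes $V_1,\ldots,V_d$ and edges that contain exactly one vertex from each class; only such $d$-sets are considered as possible edges. A copy of $K^d_{p_1,\ldots,p_d}$ in $H$ is a permutation $\pi:[d]\to[d]$ together with sets $S_i\subseteq V_i$, $|S_i|=p_{\pi(i)}$, such that all $d$-sets with one vertex from each $S_i$ are edges. $H$ is weakly $K^d_{p_1,\ldots,p_d}$-saturated if its non-edges can be added one at a time in some order so that each added edge creates a new copy of $K^d_{p_1,\ldots,p_d}$ containing that edge. $W_n(p_1,\ldots,p_d)$ is the minimum number of edges in a weakly $K^d_{p_1,\ldots,p_d}$-saturated such hypergraph with $n$ vertices in each class. For $x\in[n]^d$, $x_{(i)}$ is the $i$-th smallest entry of $x$ sorted with repetitions. *)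

theory Defs
  imports "HOL-Combinatorics.Permutations"
begin

text \<open>Vertex classes V_1..V_d are indexed 0..d-1 and each is identified with {1..n}.
  A possible edge (a d-tuple with one vertex per class) is a list of length d with
  entries in {1..n}. A d-uniform d-partite hypergraph is a set of such tuples.\<close>

definition tuples :: "nat \<Rightarrow> nat \<Rightarrow> nat list set" where
  "tuples n d = {x. length x = d \<and> set x \<subseteq> {1..n}}"

definition copy_containing :: "nat \<Rightarrow> nat list \<Rightarrow> nat list set \<Rightarrow> nat list \<Rightarrow> bool" where
  "copy_containing n p E e \<longleftrightarrow>
     (\<exists>\<pi> S. \<pi> permutes {..<length p} \<and>
        (\<forall>i<length p. S i \<subseteq> {1..n} \<and> card (S i) = p ! (\<pi> i)) \<and>
        (\<forall>x. length x = length p \<and> (\<forall>i<length p. x ! i \<in> S i) \<longrightarrow> x \<in> E) \<and>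
        (\<forall>i<length p. e ! i \<in> S i))"

text \<open>Weak saturation: the non-edges can be listed (each exactly once) so that adding them
  one at a time, each added edge lies in a copy of K^d_p in the current hypergraph
  (such a copy is necessarily new, since it contains the new edge).\<close>
definition weakly_sat :: "nat \<Rightarrow> nat list \<Rightarrow> nat list set \<Rightarrow> bool" where
  "weakly_sat n p H \<longleftrightarrow> H \<subseteq> tuples n (length p) \<and>
     (\<exists>es. distinct es \<and> set es = tuples n (length p) - H \<and>
        (\<forall>k<length es. copy_containing n p (H \<union> set (take (Suc k) es)) (es ! k)))"

definition W :: "nat \<Rightarrow> nat list \<Rightarrow> nat" where
  "W n p = Inf {card H | H. weakly_sat n p H}"

definition G0 :: "nat \<Rightarrow> nat list \<Rightarrow> nat list set" where
  "G0 n p = {x \<in> tuples n (length p). \<not> (\<forall>i<length p. sort x ! i \<ge> p ! i)}"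

end

theory Submission
  imports Defs "HOL-Computational_Algebra.Polynomial"
begin

text \<open>
  For a \<in> [n]^d let f_a(x) = \<Prod>_i \<Prod>_{1 \<le> s < a_i} (x_i - s). On [n]^d these functions are
  linearly independent, being triangular with respect to the pointwise order. If a weakly saturated
  H had fewer than |G_0| edges, some nontrivial combination P of the f_a with a \<in> G_0 would vanish
  on H. Every a \<in> G_0 has, for each permutation \<pi>, a coordinate with a_i < p_\<pi>(i). Hence, on the box
  S_1 \<times> ... \<times> S_d of a copy of K_p, every f_a has degree at most |S_i| - 2 in some variable x_i,
  and is therefore killed by the divided difference over S_i in that variable. Applying these
  divided differences in all variables shows that P vanishes at the new edge as soon as it vanishes
  on the rest of the box. So P vanishes at every added edge, hence on all of [n]^d, contradicting
  independence.
\<close>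

lemma homogeneous_system_nontrivial_solution:
  fixes L :: "'b \<Rightarrow> 'a \<Rightarrow> 'c::field"
  assumes "finite B" and "finite A" and "card B < card A"
  shows "\<exists>g. (\<exists>a\<in>A. g a \<noteq> 0) \<and> (\<forall>b\<in>B. (\<Sum>a\<in>A. L b a * g a) = 0)"
  using assms
proof (induction B arbitrary: A L rule: finite_induct)
  case empty
  then obtain a0 where "a0 \<in> A"
    by fastforce
  then show ?case
    by (intro exI[of _ "\<lambda>_. 1"]) auto
next
  case (insert b0 B)
  show ?case
  proof (cases "\<forall>a\<in>A. L b0 a = 0")
    case True
    from insert have "card B < card A"
      by simp
    with insert.IH[of A L] insert.prems True show ?thesis
      by auto
  next
    case False
    then obtain a0 where a0: "a0 \<in> A" "L b0 a0 \<noteq> 0"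
      by blast
    define A' where "A' = A - {a0}"
    \<comment> \<open>Eliminate the unknown at a0 using the equation of b0.\<close>
    define L' where "L' b a = L b a - L b a0 / L b0 a0 * L b0 a" for b a
    have "finite A'" "card B < card A'"
      using insert a0 by (auto simp: A'_def)
    from insert.IH[OF this, of L'] obtain g where
      g_nz: "\<exists>a\<in>A'. g a \<noteq> 0" and g_sol: "\<forall>b\<in>B. (\<Sum>a\<in>A'. L' b a * g a) = 0"
      by blast
    define g' where "g' = g(a0 := - (\<Sum>a\<in>A'. L b0 a * g a) / L b0 a0)"
    have split: "(\<Sum>a\<in>A. L b a * g' a) = L b a0 * g' a0 + (\<Sum>a\<in>A'. L b a * g a)" for b
    proof -
      have "(\<Sum>a\<in>A'. L b a * g' a) = (\<Sum>a\<in>A'. L b a * g a)"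
        by (rule sum.cong) (auto simp: g'_def A'_def)
      with a0 insert.prems(1) show ?thesis
        by (simp add: A'_def sum.remove)
    qed
    have "(\<Sum>a\<in>A. L b a * g' a) = 0" if "b \<in> insert b0 B" for b
    proof (cases "b = b0")
      case True
      show ?thesis
        unfolding True split using a0 by (simp add: g'_def)
    next
      case False
      with that g_sol have "(\<Sum>a\<in>A'. L' b a * g a) = 0"
        by auto
      then have "(\<Sum>a\<in>A'. L b a * g a) = L b a0 / L b0 a0 * (\<Sum>a\<in>A'. L b0 a * g a)"
        by (simp add: L'_def algebra_simps sum_subtractf sum_distrib_left)
      then show ?thesis
        unfolding split using a0 by (simp add: g'_def)
    qed
    moreover have "\<exists>a\<in>A. g' a \<noteq> 0"
      using g_nz by (auto simp: g'_def A'_def)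
    ultimately show ?thesis
      by blast
  qed
qed

lemma sum_divided_differences_eq_0:
  fixes f :: "'a::field poly" and x :: "'b \<Rightarrow> 'a"
  assumes S: "finite S" "inj_on x S" and deg: "degree f + 2 \<le> card S"
  shows "(\<Sum>t\<in>S. poly f (x t) / (\<Prod>s\<in>S-{t}. x t - x s)) = 0"
proof -
  define m where "m = card S - 1"
  define c where "c t = poly f (x t) / (\<Prod>s\<in>S-{t}. x t - x s)" for t
  define q where "q t = (\<Prod>s\<in>S-{t}. [:- x s, 1:])" for t
  have card_minus: "card (S - {t}) = m" if "t \<in> S" for t
    using that S by (simp add: m_def)
  have degree_q: "degree (q t) = m" if "t \<in> S" for t
    using card_minus[OF that] by (simp add: q_def degree_prod_eq_sum_degree)
  have lead_q: "coeff (q t) m = 1" if "t \<in> S" for t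
  proof -
    have "coeff (q t) m = lead_coeff (q t)"
      by (simp add: degree_q[OF that])
    then show ?thesis
      by (simp add: q_def lead_coeff_prod)
  qed
  have poly_q: "poly (q t) (x u) = (if u = t then (\<Prod>s\<in>S-{t}. x t - x s) else 0)"
    if "u \<in> S" "t \<in> S" for t u
    using that S by (auto simp: q_def poly_prod inj_on_eq_iff)
  \<comment> \<open>Lagrange interpolation of f at the nodes x ` S.\<close>
  define l where "l = (\<Sum>t\<in>S. smult (c t) (q t))"
  have "f = l"
  proof (rule poly_eqI_degree)
    fix y assume "y \<in> x ` S"
    then obtain u where u: "u \<in> S" "y = x u"
      by blast
    have "poly l (x u) = (\<Sum>t\<in>S. if t = u then c u * (\<Prod>s\<in>S-{u}. x u - x s) else 0)"
      unfolding l_def poly_sum by (rule sum.cong) (auto simp: poly_q u)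
    also have "\<dots> = poly f (x u)"
      using S u by (auto simp: c_def inj_on_eq_iff)
    finally show "poly f y = poly l y"
      by (simp add: u)
  next
    have "degree l \<le> m"
      unfolding l_def using degree_q S(1)
      by (intro degree_sum_le) (auto intro: order.trans[OF degree_smult_le])
    then show "degree f < card (x ` S)" "degree l < card (x ` S)"
      using deg S by (simp_all add: card_image m_def)
  qed
  have "coeff f m = 0"
    using deg by (intro coeff_eq_0) (simp add: m_def)
  moreover have "coeff l m = (\<Sum>t\<in>S. c t)"
    using lead_q by (simp add: l_def coeff_sum)
  ultimately show ?thesis
    using \<open>f = l\<close> by (simp add: c_def)
qed

definition tuple_box :: "nat \<Rightarrow> (nat \<Rightarrow> 'a set) \<Rightarrow> 'a list set" where
  "tuple_box d S = {x. length x = d \<and> (\<forall>i<d. x ! i \<in> S i)}"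

lemma tuples_eq_tuple_box: "tuples n d = tuple_box d (\<lambda>_. {1..n})"
  by (auto simp: tuples_def tuple_box_def set_conv_nth)

lemma bij_betw_tuple_box_PiE:
  "bij_betw (\<lambda>x. restrict ((!) x) {..<d}) (tuple_box d S) (PiE {..<d} S)"
proof (rule bij_betw_byWitness[where f' = "\<lambda>f. map f [0..<d]"])
  show "\<forall>x\<in>tuple_box d S. map (restrict ((!) x) {..<d}) [0..<d] = x"
    by (auto simp: tuple_box_def list_eq_iff_nth_eq)
  show "\<forall>f\<in>PiE {..<d} S. restrict ((!) (map f [0..<d])) {..<d} = f"
    by (intro ballI ext) (auto simp: PiE_iff extensional_def)
  show "(\<lambda>x. restrict ((!) x) {..<d}) ` tuple_box d S \<subseteq> PiE {..<d} S"
    by (intro image_subsetI) (simp add: tuple_box_def restrict_PiE_iff)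
  show "(\<lambda>f. map f [0..<d]) ` PiE {..<d} S \<subseteq> tuple_box d S"
    by (intro image_subsetI) (simp add: tuple_box_def PiE_iff)
qed

lemma finite_tuple_box:
  assumes "\<And>i. i < d \<Longrightarrow> finite (S i)"
  shows "finite (tuple_box d S)"
  unfolding bij_betw_finite[OF bij_betw_tuple_box_PiE] by (rule finite_PiE) (use assms in auto)

lemma sum_prod_tuple_box:
  fixes f :: "nat \<Rightarrow> 'a \<Rightarrow> 'b::comm_semiring_1"
  assumes "\<And>i. i < d \<Longrightarrow> finite (S i)"
  shows "(\<Sum>x\<in>tuple_box d S. \<Prod>i<d. f i (x ! i)) = (\<Prod>i<d. \<Sum>t\<in>S i. f i t)"
proof -
  have "(\<Prod>i<d. \<Sum>t\<in>S i. f i t) = (\<Sum>g\<in>PiE {..<d} S. \<Prod>i<d. f i (g i))"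
    by (rule prod_sum_PiE) (use assms in auto)
  also have "\<dots> = (\<Sum>x\<in>tuple_box d S. \<Prod>i<d. f i (x ! i))"
    by (subst sum.reindex_bij_betw[OF bij_betw_tuple_box_PiE, symmetric]) simp
  finally show ?thesis ..
qed

lemma sorted_nth_le_iff:
  fixes s :: "'a::linorder list"
  assumes "sorted s" and "k < length s"
  shows "s ! k \<le> v \<longleftrightarrow> k < length (filter (\<lambda>y. y \<le> v) s)"
proof
  assume "s ! k \<le> v"
  then have "s ! j \<le> v" if "j \<le> k" for j
    using sorted_nth_mono[OF assms(1) that assms(2)] by simp
  then have "{..k} \<subseteq> {j. j < length s \<and> s ! j \<le> v}"
    using assms(2) by auto
  then have "card {..k} \<le> card {j. j < length s \<and> s ! j \<le> v}"
    by (intro card_mono) auto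
  then show "k < length (filter (\<lambda>y. y \<le> v) s)"
    by (simp add: length_filter_conv_card)
next
  assume less: "k < length (filter (\<lambda>y. y \<le> v) s)"
  show "s ! k \<le> v"
  proof (rule ccontr)
    assume "\<not> s ! k \<le> v"
    then have "\<not> s ! j \<le> v" if "k \<le> j" "j < length s" for j
      using sorted_nth_mono[OF assms(1) that] by auto
    then have "{j. j < length s \<and> s ! j \<le> v} \<subseteq> {..<k}"
      using not_less by blast
    then have "card {j. j < length s \<and> s ! j \<le> v} \<le> card {..<k}"
      by (intro card_mono) auto
    with less show False
      by (simp add: length_filter_conv_card)
  qed
qed

lemma sort_nth_mono:
  fixes a b :: "'a::linorder list"
  assumes "length b = length a" and "\<forall>i<length a. b ! i \<le> a ! i" and "k < length a"
  shows "sort b ! k \<le> sort a ! k"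
proof -
  define v where "v = sort a ! k"
  have "length (filter (\<lambda>y. y \<le> v) a) \<le> length (filter (\<lambda>y. y \<le> v) b)"
  proof -
    have "{i. i < length a \<and> a ! i \<le> v} \<subseteq> {i. i < length b \<and> b ! i \<le> v}"
      using assms(1,2) order_trans by fastforce
    then show ?thesis
      unfolding length_filter_conv_card by (intro card_mono) auto
  qed
  moreover have "length (filter P (sort xs)) = length (filter P xs)" for P and xs :: "'a list"
    by (simp add: filter_sort)
  ultimately have "k < length (filter (\<lambda>y. y \<le> v) (sort b))"
    using sorted_nth_le_iff[of "sort a" k v] assms by (simp add: v_def)
  then show ?thesis
    using sorted_nth_le_iff[of "sort b" k v] assms by (simp add: v_def)
qed

lemma nth_le_sort_nth_if_permuted_le:
  fixes a p :: "'a::linorder list"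
  assumes "sorted p" and "\<pi> permutes {..<length p}" and "length a = length p"
    and "\<forall>i<length p. p ! \<pi> i \<le> a ! i" and "k < length p"
  shows "p ! k \<le> sort a ! k"
proof -
  have "sort (permute_list \<pi> p) = p"
    using assms by (intro properties_for_sort) simp_all
  then show ?thesis
    using sort_nth_mono[of "permute_list \<pi> p" a k] assms by (simp add: permute_list_nth)
qed

definition falling_poly :: "nat \<Rightarrow> real poly" where
  "falling_poly k = (\<Prod>s\<in>{1..<k}. [:- real s, 1:])"

definition falling_prod :: "nat \<Rightarrow> nat list \<Rightarrow> nat list \<Rightarrow> real" where
  "falling_prod d a x = (\<Prod>i<d. poly (falling_poly (a ! i)) (real (x ! i)))"

lemma degree_falling_poly: "degree (falling_poly k) = k - 1"
  by (simp add: falling_poly_def degree_prod_eq_sum_degree)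

lemma poly_falling_poly_eq_0_iff:
  "1 \<le> t \<Longrightarrow> poly (falling_poly k) (real t) = 0 \<longleftrightarrow> t < k"
  by (auto simp: falling_poly_def poly_prod)

lemma sum_list_less_if_pointwise_le:
  fixes a b :: "'a::ordered_cancel_comm_monoid_add list"
  assumes "length b = length a" and "\<forall>i<length a. b ! i \<le> a ! i" and "b \<noteq> a"
  shows "sum_list b < sum_list a"
proof -
  obtain i where i: "i < length a" "b ! i \<noteq> a ! i"
    using assms(1,3) by (auto simp: list_eq_iff_nth_eq)
  with assms(2) have "b ! i < a ! i"
    by (simp add: order_le_neq_trans)
  with i assms(2) have "(\<Sum>i = 0..<length a. b ! i) < (\<Sum>i = 0..<length a. a ! i)"
    by (intro sum_strict_mono_ex1) auto
  with assms(1) show ?thesis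
    by (simp add: sum_list_sum_nth)
qed

lemma finite_tuples: "finite (tuples n d)"
  unfolding tuples_eq_tuple_box by (rule finite_tuple_box) simp

lemma falling_prod_ne_0_imp_le:
  assumes "x \<in> tuples n d" and "falling_prod d a x \<noteq> 0" and "i < d"
  shows "a ! i \<le> x ! i"
proof -
  have "x ! i \<in> {1..n}"
    using assms(1,3) nth_mem[of i x] by (auto simp: tuples_def simp del: nth_mem)
  moreover have "poly (falling_poly (a ! i)) (real (x ! i)) \<noteq> 0"
    using assms(2,3) by (simp add: falling_prod_def)
  ultimately show ?thesis
    by (simp add: poly_falling_poly_eq_0_iff)
qed

lemma falling_prod_self_ne_0: "x \<in> tuples n d \<Longrightarrow> falling_prod d x x \<noteq> 0"
  by (auto simp: falling_prod_def tuples_def poly_falling_poly_eq_0_iff dest!: nth_mem)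

lemma falling_prods_linearly_independent:
  assumes G: "G \<subseteq> tuples n d"
    and zero: "\<forall>x\<in>tuples n d. (\<Sum>a\<in>G. g a * falling_prod d a x) = 0"
  shows "\<forall>a\<in>G. g a = 0"
proof (rule ccontr)
  assume "\<not> (\<forall>a\<in>G. g a = 0)"
  then obtain a where a: "a \<in> G" "g a \<noteq> 0"
    and a_min: "\<And>b. b \<in> G \<Longrightarrow> g b \<noteq> 0 \<Longrightarrow> sum_list a \<le> sum_list b"
    using ex_has_least_nat[of "\<lambda>b. b \<in> G \<and> g b \<noteq> 0" _ sum_list] by blast
  have a_tuple: "a \<in> tuples n d"
    using a G by auto
  \<comment> \<open>Evaluating at a, only b = a survives: a nonzero term forces b \<le> a pointwise.\<close>
  have off_diagonal: "g b * falling_prod d b a = 0" if b: "b \<in> G - {a}" for b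
  proof (rule ccontr)
    assume nz: "g b * falling_prod d b a \<noteq> 0"
    have "length b = length a"
      using a_tuple b G by (auto simp: tuples_def)
    moreover have "\<forall>i<length a. b ! i \<le> a ! i"
      using a_tuple nz falling_prod_ne_0_imp_le[OF a_tuple] by (auto simp: tuples_def)
    ultimately have "sum_list b < sum_list a"
      using b by (intro sum_list_less_if_pointwise_le) auto
    with a_min[of b] b nz show False
      by auto
  qed
  have "finite G"
    using G finite_tuples by (rule finite_subset)
  with a have "(\<Sum>b\<in>G. g b * falling_prod d b a)
      = g a * falling_prod d a a + (\<Sum>b\<in>G - {a}. g b * falling_prod d b a)"
    by (simp add: sum.remove)
  also have "\<dots> = g a * falling_prod d a a"
    using off_diagonal by (subst sum.neutral) auto
  finally show False
    using zero a_tuple a falling_prod_self_ne_0[OF a_tuple] by simp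
qed

lemma G0_subset_tuples: "G0 n p \<subseteq> tuples n (length p)"
  by (auto simp: G0_def)

lemma G0_not_dominated:
  assumes "sorted p" and "a \<in> G0 n p" and "\<pi> permutes {..<length p}"
  shows "\<exists>i<length p. a ! i < p ! \<pi> i"
proof (rule ccontr)
  assume "\<not> ?thesis"
  then have "\<forall>i<length p. p ! \<pi> i \<le> a ! i"
    using not_less by blast
  moreover have "length a = length p"
    using assms(2) by (auto simp: G0_def tuples_def)
  ultimately have "\<forall>k<length p. p ! k \<le> sort a ! k"
    using nth_le_sort_nth_if_permuted_le[OF assms(1,3)] by blast
  with assms(2) show False
    by (auto simp: G0_def)
qed

lemma sum_prod_poly_vanishes_at_box_point:
  fixes G :: "'a set" and g :: "'a \<Rightarrow> real" and F :: "'a \<Rightarrow> nat \<Rightarrow> real poly"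
    and d :: nat and S :: "nat \<Rightarrow> nat set"
  defines "P \<equiv> \<lambda>x. \<Sum>a\<in>G. g a * (\<Prod>i<d. poly (F a i) (real (x ! i)))"
  assumes fin: "\<And>i. i < d \<Longrightarrow> finite (S i)" and e: "e \<in> tuple_box d S"
    and zero: "\<And>x. x \<in> tuple_box d S - {e} \<Longrightarrow> P x = 0"
    and low: "\<And>a. a \<in> G \<Longrightarrow> \<exists>i<d. degree (F a i) + 2 \<le> card (S i)"
  shows "P e = 0"
proof -
  \<comment> \<open>w i are the weights of the divided difference over the nodes S i.\<close>
  define w where "w i t = 1 / (\<Prod>s\<in>S i - {t}. real t - real s)" for i t
  have annihilate: "(\<Sum>t\<in>S i. w i t * poly f (real t)) = 0"
    if "i < d" "degree f + 2 \<le> card (S i)" for i f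
    using sum_divided_differences_eq_0[of "S i" real f] fin that by (simp add: w_def)
  have "(\<Sum>x\<in>tuple_box d S. (\<Prod>i<d. w i (x ! i)) * P x)
      = (\<Sum>a\<in>G. g a * (\<Sum>x\<in>tuple_box d S. \<Prod>i<d. w i (x ! i) * poly (F a i) (real (x ! i))))"
    unfolding P_def by (simp add: sum_distrib_left sum_distrib_right sum.swap[of _ G]
        prod.distrib mult_ac)
  also have "\<dots> = (\<Sum>a\<in>G. g a * (\<Prod>i<d. \<Sum>t\<in>S i. w i t * poly (F a i) (real t)))"
    by (intro sum.cong refl arg_cong[where f = "(*) _"] sum_prod_tuple_box fin)
  also have "\<dots> = 0"
  proof (rule sum.neutral, rule ballI)
    fix a assume "a \<in> G"
    with low obtain i where "i < d" "degree (F a i) + 2 \<le> card (S i)"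
      by blast
    then show "g a * (\<Prod>i<d. \<Sum>t\<in>S i. w i t * poly (F a i) (real t)) = 0"
      using annihilate by simp blast
  qed
  finally have "(\<Sum>x\<in>tuple_box d S. (\<Prod>i<d. w i (x ! i)) * P x) = 0" .
  moreover have "(\<Sum>x\<in>tuple_box d S. (\<Prod>i<d. w i (x ! i)) * P x) = (\<Prod>i<d. w i (e ! i)) * P e"
    using finite_tuple_box[OF fin] e zero by (simp add: sum.remove sum.neutral)
  moreover have "(\<Prod>i<d. w i (e ! i)) \<noteq> 0"
    using fin by (simp add: w_def)
  ultimately show ?thesis
    by simp
qed

definition G0_poly :: "nat \<Rightarrow> nat list \<Rightarrow> (nat list \<Rightarrow> real) \<Rightarrow> nat list \<Rightarrow> real" where
  "G0_poly n p g x = (\<Sum>a\<in>G0 n p. g a * falling_prod (length p) a x)"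

lemma copy_containing_vanishes:
  assumes p: "sorted p" "\<forall>i<length p. 1 \<le> p ! i"
    and copy: "copy_containing n p E e" and e: "length e = length p"
    and zero: "\<forall>x\<in>E - {e}. G0_poly n p g x = 0"
  shows "G0_poly n p g e = 0"
proof -
  from copy obtain \<pi> S where \<pi>: "\<pi> permutes {..<length p}"
    and S: "\<forall>i<length p. S i \<subseteq> {1..n} \<and> card (S i) = p ! \<pi> i"
    and S_in_E: "\<forall>x. length x = length p \<and> (\<forall>i<length p. x ! i \<in> S i) \<longrightarrow> x \<in> E"
    and e_in_S: "\<forall>i<length p. e ! i \<in> S i"
    unfolding copy_containing_def by blast
  have \<pi>_less: "\<pi> i < length p" if "i < length p" for i
    using permutes_in_image[OF \<pi>] that by simp
  have fin: "finite (S i)" if "i < length p" for i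
    using S p(2) \<pi>_less[OF that] that by (intro card_ge_0_finite) force
  show ?thesis
    unfolding G0_poly_def falling_prod_def
  proof (rule sum_prod_poly_vanishes_at_box_point[OF fin])
    show "e \<in> tuple_box (length p) S"
      using e e_in_S by (simp add: tuple_box_def)
  next
    fix x assume "x \<in> tuple_box (length p) S - {e}"
    with S_in_E have "x \<in> E - {e}"
      by (auto simp: tuple_box_def)
    with zero show "(\<Sum>a\<in>G0 n p. g a * (\<Prod>i<length p. poly (falling_poly (a ! i)) (real (x ! i)))) = 0"
      by (simp add: G0_poly_def falling_prod_def)
  next
    fix a assume a: "a \<in> G0 n p"
    then obtain i where i: "i < length p" "a ! i < p ! \<pi> i"
      using G0_not_dominated[OF p(1) a \<pi>] by blast
    moreover have "a ! i \<in> {1..n}"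
    proof -
      have "set a \<subseteq> {1..n}" "length a = length p"
        using a G0_subset_tuples by (auto simp: tuples_def)
      moreover from this(2) i(1) have "a ! i \<in> set a"
        by simp
      ultimately show ?thesis
        by blast
    qed
    moreover have "card (S i) = p ! \<pi> i"
      using S i(1) by blast
    ultimately show "\<exists>i<length p. degree (falling_poly (a ! i)) + 2 \<le> card (S i)"
      by (intro exI[of _ i]) (simp add: degree_falling_poly)
  qed
qed

lemma weakly_sat_vanishing_extends:
  assumes p: "sorted p" "\<forall>i<length p. 1 \<le> p ! i"
    and sat: "weakly_sat n p H" and zero: "\<forall>x\<in>H. G0_poly n p g x = 0"
  shows "\<forall>x\<in>tuples n (length p). G0_poly n p g x = 0"
proof -
  from sat obtain es where es: "set es = tuples n (length p) - H"
    and step: "\<forall>k<length es. copy_containing n p (H \<union> set (take (Suc k) es)) (es ! k)"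
    unfolding weakly_sat_def by blast
  have vanish: "G0_poly n p g (es ! k) = 0" if "k < length es" for k
    using that
  proof (induction k rule: less_induct)
    case (less k)
    have "x \<in> H \<or> x \<in> set (take k es)" if "x \<in> H \<union> set (take (Suc k) es) - {es ! k}" for x
      using that less.prems by (auto simp: take_Suc_conv_app_nth)
    then have "\<forall>x\<in>H \<union> set (take (Suc k) es) - {es ! k}. G0_poly n p g x = 0"
      using zero less.IH by (fastforce simp: in_set_conv_nth)
    moreover have "length (es ! k) = length p"
      using es less.prems nth_mem by (fastforce simp: tuples_def)
    ultimately show ?case
      using copy_containing_vanishes[OF p] step less.prems by blast
  qed
  show ?thesis
  proof
    fix x assume "x \<in> tuples n (length p)"
    with es have "x \<in> H \<or> x \<in> set es"
      by blast
    with zero vanish show "G0_poly n p g x = 0"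
      by (auto simp: in_set_conv_nth)
  qed
qed

lemma card_G0_le_card_weakly_sat:
  assumes p: "sorted p" "\<forall>i<length p. 1 \<le> p ! i" and sat: "weakly_sat n p H"
  shows "card (G0 n p) \<le> card H"
proof (rule ccontr)
  assume "\<not> ?thesis"
  then have "card H < card (G0 n p)"
    by simp
  moreover have "finite H"
    using sat finite_tuples by (auto simp: weakly_sat_def intro: finite_subset)
  moreover have "finite (G0 n p)"
    using G0_subset_tuples finite_tuples by (rule finite_subset)
  ultimately obtain g where g: "\<exists>a\<in>G0 n p. g a \<noteq> 0"
    and zero: "\<forall>x\<in>H. (\<Sum>a\<in>G0 n p. falling_prod (length p) a x * g a) = 0"
    using homogeneous_system_nontrivial_solution[of H "G0 n p" "\<lambda>x a. falling_prod (length p) a x"]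
    by blast
  from zero have "\<forall>x\<in>H. G0_poly n p g x = 0"
    by (simp add: G0_poly_def mult.commute)
  then have "\<forall>x\<in>tuples n (length p). (\<Sum>a\<in>G0 n p. g a * falling_prod (length p) a x) = 0"
    unfolding G0_poly_def[symmetric] by (rule weakly_sat_vanishing_extends[OF p sat])
  with g show False
    using falling_prods_linearly_independent[OF G0_subset_tuples] by blast
qed

theorem lemma2:
  fixes n :: nat and p :: "nat list"
  assumes "sorted p" and "\<forall>i<length p. 1 \<le> p ! i \<and> p ! i \<le> n"
  shows "W n p \<ge> card (G0 n p) \<and>
         (\<forall>H. weakly_sat n p H \<longrightarrow> card H \<ge> card (G0 n p))"
proof -
  have bound: "\<forall>H. weakly_sat n p H \<longrightarrow> card H \<ge> card (G0 n p)"
    using card_G0_le_card_weakly_sat assms by blast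
  have "weakly_sat n p (tuples n (length p))"
    unfolding weakly_sat_def by (intro conjI exI[of _ "[]"]) auto
  then have "card (G0 n p) \<le> W n p"
    unfolding W_def using bound by (intro cInf_greatest) auto
  with bound show ?thesis
    by blast
qed

end
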